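(* Let $f:\mathbb{R}^d\to\mathbb{R}$ and $P:\mathbb{R}^d\to\mathbb{R}^s$ be continuously differentiable, $D\subseteq\mathbb{R}^s$ closed, $\Omega=\{z\mid P(z)\in D\}$, $\bar z\in\Omega$, and assume that GGCQ holds at $\bar z$. Then $\bar z$ is a sharp minimum of the problem $\min f(z)$ s.t. $P(z)\in D$ if and only if there is some $\alpha'>0$ such that \[\langle\nabla f(\bar z),u\rangle\ge\alpha'\|u\|\quad\forall u\in T^{\rm lin}_{P,D}(\bar z).\]
   Context: Tangent cone $T_\Omega(\bar z)=\{w\mid \exists t_k\downarrow0,\ w_k\to w,\ \bar z+t_kw_k\in\Omega\}$; polar cone $K^\ast=\{z^\ast\mid\langle z^\ast,w\rangle\le0\ \forall w\in K\}$; regular normal cone $\widehat N_\Omega(\bar z)=(T_\Omega(\bar z))^\ast$. Linearized tangent cone $T^{\rm lin}_{P,D}(\bar z)=\{u\mid\nabla P(\bar z)u\in T_D(P(\bar z))\}$. GGCQ holds at $\bar z$ if $\widehat N_\Omega(\bar z)=(T^{\rm lin}_{P,D}(\bar z))^\ast$. A point $\bar z\in\Omega$ is a sharp minimum if there is $\alpha>0$ such that $f(z)\ge f(\bar z)+\alpha\|z-\bar z\|$ for all $z\in\Omega$ close to $\bar z$. *)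

theory Defs
  imports "HOL-Analysis.Analysis"
begin

definition tangent_cone :: "'a::real_normed_vector set \<Rightarrow> 'a \<Rightarrow> 'a set" where
  "tangent_cone Omega zb = {w. \<exists>t wk. (\<forall>k. t k > (0::real)) \<and> t \<longlonglongrightarrow> 0 \<and>
      wk \<longlonglongrightarrow> w \<and> (\<forall>k. zb + t k *\<^sub>R wk k \<in> Omega)}"

definition polar_cone :: "'a::real_inner set \<Rightarrow> 'a set" where
  "polar_cone K = {zs. \<forall>w\<in>K. zs \<bullet> w \<le> 0}"

definition regular_normal_cone :: "'a::real_inner set \<Rightarrow> 'a \<Rightarrow> 'a set" where
  "regular_normal_cone Omega zb = polar_cone (tangent_cone Omega zb)"

text \<open>Linearized tangent cone; DPz is the derivative (Jacobian) of P at zb.\<close>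
definition lin_tangent_cone :: "('a::real_normed_vector \<Rightarrow> 'b::real_normed_vector) \<Rightarrow> 'b set \<Rightarrow> 'a \<Rightarrow> ('a \<Rightarrow> 'b) \<Rightarrow> 'a set" where
  "lin_tangent_cone P D zb DPz = {u. DPz u \<in> tangent_cone D (P zb)}"

definition GGCQ :: "('a::real_inner \<Rightarrow> 'b::real_normed_vector) \<Rightarrow> 'b set \<Rightarrow> 'a \<Rightarrow> ('a \<Rightarrow> 'b) \<Rightarrow> bool" where
  "GGCQ P D zb DPz \<longleftrightarrow>
     regular_normal_cone {z. P z \<in> D} zb = polar_cone (lin_tangent_cone P D zb DPz)"

definition sharp_min :: "('a::real_normed_vector \<Rightarrow> real) \<Rightarrow> 'a set \<Rightarrow> 'a \<Rightarrow> bool" where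
  "sharp_min f Omega zb \<longleftrightarrow> zb \<in> Omega \<and> (\<exists>\<alpha>>0. \<exists>\<delta>>0. \<forall>z\<in>Omega.
      norm (z - zb) < \<delta> \<longrightarrow> f z \<ge> f zb + \<alpha> * norm (z - zb))"

end

theory Submission
  imports Defs
begin

text \<open>
  A sharp minimum is characterised to first order by the growth condition
  \<open>\<alpha> \<parallel>w\<parallel> \<le> \<nabla>f(zb) \<bullet> w\<close> on the tangent cone \<open>T\<^sub>\<Omega>(zb)\<close>: necessity by passing to the
  limit in difference quotients along tangent sequences, sufficiency by extracting a tangent
  direction from a sequence violating sharpness (the unit sphere is compact). The growth condition
  says exactly that \<open>\<alpha> B - \<nabla>f(zb)\<close> lies in the polar of the cone, where \<open>B\<close> is the closed unit
  ball, so it depends on the cone only through its polar, and GGCQ identifies the polars of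
  \<open>T\<^sub>\<Omega>(zb)\<close> and of the linearized cone.
\<close>

lemma has_derivative_quotient_tendsto:
  fixes f :: "'a::real_normed_vector \<Rightarrow> 'b::real_normed_vector"
  assumes "(f has_derivative f') (at x)"
    and t_pos: "\<And>k. t k > 0" and t0: "t \<longlonglongrightarrow> 0" and v: "v \<longlonglongrightarrow> w"
  shows "(\<lambda>k. (f (x + t k *\<^sub>R v k) - f x) /\<^sub>R t k) \<longlonglongrightarrow> f' w"
proof -
  \<comment> \<open>\<open>\<rho> 0 = 0\<close> because \<open>x / 0 = 0\<close>, so \<open>\<rho>\<close> is continuous at \<open>0\<close> and may be composed with
      \<open>t k *\<^sub>R v k\<close>, which need not avoid \<open>0\<close>.\<close>
  define \<rho> where "\<rho> h = norm (f (x + h) - f x - f' h) / norm h" for h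
  have lin: "bounded_linear f'" and "(\<rho> \<longlongrightarrow> 0) (at 0)"
    using assms(1) unfolding has_derivative_at \<rho>_def by auto
  then have "isCont \<rho> 0"
    by (simp add: isCont_def \<rho>_def)
  moreover have "(\<lambda>k. t k *\<^sub>R v k) \<longlonglongrightarrow> 0"
    using tendsto_scaleR[OF t0 v] by simp
  ultimately have "(\<lambda>k. \<rho> (t k *\<^sub>R v k)) \<longlonglongrightarrow> \<rho> 0"
    by (rule isCont_tendsto_compose)
  then have "(\<lambda>k. \<rho> (t k *\<^sub>R v k) * norm (v k)) \<longlonglongrightarrow> \<rho> 0 * norm w"
    by (intro tendsto_mult tendsto_norm v)
  moreover have "\<rho> (t k *\<^sub>R v k) * norm (v k) = norm ((f (x + t k *\<^sub>R v k) - f x) /\<^sub>R t k - f' (v k))" for k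
  proof (cases "v k = 0")
    case True
    then show ?thesis using lin by (simp add: linear_simps)
  next
    case False
    have "(f (x + t k *\<^sub>R v k) - f x) /\<^sub>R t k - f' (v k)
        = (f (x + t k *\<^sub>R v k) - f x - f' (t k *\<^sub>R v k)) /\<^sub>R t k"
      using t_pos[of k] lin by (simp add: linear_simps algebra_simps)
    then show ?thesis
      using t_pos[of k] False by (simp add: \<rho>_def divide_inverse_commute)
  qed
  moreover have "\<rho> 0 = 0"
    by (simp add: \<rho>_def)
  ultimately have "(\<lambda>k. norm ((f (x + t k *\<^sub>R v k) - f x) /\<^sub>R t k - f' (v k))) \<longlonglongrightarrow> 0"
    by simp
  then have "(\<lambda>k. (f (x + t k *\<^sub>R v k) - f x) /\<^sub>R t k - f' (v k)) \<longlonglongrightarrow> 0"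
    by (rule tendsto_norm_zero_cancel)
  then show ?thesis
    by (rule Lim_transform[OF bounded_linear.tendsto[OF lin v]])
qed

lemma tangent_growth_if_sharp_min:
  fixes f :: "'a::real_normed_vector \<Rightarrow> real"
  assumes "(f has_derivative f') (at zb)" and "sharp_min f \<Omega> zb"
  obtains \<alpha> where "\<alpha> > 0" and "\<And>w. w \<in> tangent_cone \<Omega> zb \<Longrightarrow> \<alpha> * norm w \<le> f' w"
proof -
  obtain \<alpha> \<delta> where "\<alpha> > 0" and "\<delta> > 0"
    and sharp: "\<And>z. z \<in> \<Omega> \<Longrightarrow> norm (z - zb) < \<delta> \<Longrightarrow> f zb + \<alpha> * norm (z - zb) \<le> f z"
    using assms(2) unfolding sharp_min_def by blast
  have "\<alpha> * norm w \<le> f' w" if tangent: "w \<in> tangent_cone \<Omega> zb" for w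
  proof -
    obtain t v where t_pos: "\<And>k. t k > 0" and t0: "t \<longlonglongrightarrow> 0" and v: "v \<longlonglongrightarrow> w"
      and feasible: "\<And>k. zb + t k *\<^sub>R v k \<in> \<Omega>"
      using tangent unfolding tangent_cone_def by blast
    have "(\<lambda>k. t k *\<^sub>R v k) \<longlonglongrightarrow> 0"
      using tendsto_scaleR[OF t0 v] by simp
    then have "eventually (\<lambda>k. norm (t k *\<^sub>R v k) < \<delta>) sequentially"
      using \<open>\<delta> > 0\<close> by (rule order_tendstoD(2)[OF tendsto_norm_zero])
    then have below: "eventually (\<lambda>k. \<alpha> * norm (v k) \<le> (f (zb + t k *\<^sub>R v k) - f zb) /\<^sub>R t k) sequentially"
    proof eventually_elim
      case (elim k)
      then have "f zb + \<alpha> * norm (t k *\<^sub>R v k) \<le> f (zb + t k *\<^sub>R v k)"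
        using sharp[OF feasible[of k]] by simp
      then show ?case
        using t_pos[of k] by (simp add: field_simps)
    qed
    have lower: "(\<lambda>k. \<alpha> * norm (v k)) \<longlonglongrightarrow> \<alpha> * norm w"
      by (intro tendsto_intros v)
    show ?thesis
      by (rule tendsto_le[OF trivial_limit_sequentially
            has_derivative_quotient_tendsto[OF assms(1) t_pos t0 v] lower below])
  qed
  with \<open>\<alpha> > 0\<close> show thesis by (rule that)
qed

lemma tangent_cone_direction_limit:
  fixes z :: "nat \<Rightarrow> 'a::{real_normed_vector,heine_borel}"
  assumes "\<And>n. z n \<in> \<Omega>" and "\<And>n. z n \<noteq> zb" and "z \<longlonglongrightarrow> zb"
  obtains r w where "strict_mono r" and "norm w = 1" and "w \<in> tangent_cone \<Omega> zb"
    and "(\<lambda>n. (z (r n) - zb) /\<^sub>R norm (z (r n) - zb)) \<longlonglongrightarrow> w"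
proof -
  define u where "u n = (z n - zb) /\<^sub>R norm (z n - zb)" for n
  have "closed (sphere (0::'a) 1)"
    unfolding sphere_def by (intro closed_Collect_eq continuous_intros)
  then have "compact (sphere (0::'a) 1)"
    by (simp add: compact_eq_bounded_closed bounded_subset[OF bounded_cball sphere_cball])
  moreover have "u n \<in> sphere 0 1" for n
    using assms(2) by (simp add: u_def)
  ultimately obtain w r where w: "w \<in> sphere 0 1" and r: "strict_mono r" and ur: "(u \<circ> r) \<longlonglongrightarrow> w"
    unfolding compact_def by meson
  define t where "t n = norm (z (r n) - zb)" for n
  have "t \<longlonglongrightarrow> 0"
    using LIMSEQ_subseq_LIMSEQ[OF assms(3) r] unfolding t_def
    by (simp add: o_def tendsto_norm_zero LIM_zero)
  moreover have "t n > 0" and "zb + t n *\<^sub>R (u \<circ> r) n \<in> \<Omega>" for n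
    using assms(1,2) by (simp_all add: t_def u_def)
  ultimately have "w \<in> tangent_cone \<Omega> zb"
    using ur unfolding tangent_cone_def by blast
  with r w ur show thesis
    by (intro that) (simp_all add: u_def o_def)
qed

lemma sharp_min_if_tangent_growth:
  fixes f :: "'a::{real_normed_vector,heine_borel} \<Rightarrow> real"
  assumes "(f has_derivative f') (at zb)" and "zb \<in> \<Omega>" and "\<alpha> > 0"
    and growth: "\<And>w. w \<in> tangent_cone \<Omega> zb \<Longrightarrow> \<alpha> * norm w \<le> f' w"
  shows "sharp_min f \<Omega> zb"
proof (rule ccontr)
  assume "\<not> sharp_min f \<Omega> zb"
  then have "\<exists>z\<in>\<Omega>. norm (z - zb) < 1 / real (Suc n) \<and> f z < f zb + \<alpha> / 2 * norm (z - zb)" for n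
    using assms(2,3) unfolding sharp_min_def
    by (metis half_gt_zero not_le of_nat_0_less_iff zero_less_Suc zero_less_divide_1_iff)
  then obtain z where feasible: "\<And>n. z n \<in> \<Omega>" and close: "\<And>n. norm (z n - zb) < 1 / real (Suc n)"
    and descent: "\<And>n. f (z n) < f zb + \<alpha> / 2 * norm (z n - zb)"
    by metis
  have "z n \<noteq> zb" for n
    using descent[of n] by auto
  moreover have "z \<longlonglongrightarrow> zb"
    using LIMSEQ_norm_0[OF close] by (simp add: LIM_zero_iff)
  ultimately obtain r w where r: "strict_mono r" and "norm w = 1" and "w \<in> tangent_cone \<Omega> zb"
    and v: "(\<lambda>n. (z (r n) - zb) /\<^sub>R norm (z (r n) - zb)) \<longlonglongrightarrow> w"
    by (rule tangent_cone_direction_limit[OF feasible])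
  define t where "t n = norm (z (r n) - zb)" for n
  have t_pos: "t n > 0" for n
    using \<open>\<And>n. z n \<noteq> zb\<close> by (simp add: t_def)
  have "t \<longlonglongrightarrow> 0"
    using LIMSEQ_subseq_LIMSEQ[OF \<open>z \<longlonglongrightarrow> zb\<close> r] unfolding t_def
    by (simp add: o_def tendsto_norm_zero LIM_zero)
  moreover have "(\<lambda>n. (z (r n) - zb) /\<^sub>R t n) \<longlonglongrightarrow> w"
    using v by (simp add: t_def)
  ultimately have "(\<lambda>n. (f (zb + t n *\<^sub>R ((z (r n) - zb) /\<^sub>R t n)) - f zb) /\<^sub>R t n) \<longlonglongrightarrow> f' w"
    by (rule has_derivative_quotient_tendsto[OF assms(1) t_pos])
  moreover have "zb + t n *\<^sub>R ((z (r n) - zb) /\<^sub>R t n) = z (r n)" for n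
    using t_pos[of n] by simp
  ultimately have "(\<lambda>n. (f (z (r n)) - f zb) /\<^sub>R t n) \<longlonglongrightarrow> f' w"
    by simp
  moreover have "(f (z (r n)) - f zb) /\<^sub>R t n \<le> \<alpha> / 2" for n
    using descent[of "r n"] t_pos[of n] by (simp add: t_def field_simps)
  ultimately have "f' w \<le> \<alpha> / 2"
    by (intro tendsto_upperbound) auto
  moreover have "\<alpha> \<le> f' w"
    using growth[OF \<open>w \<in> tangent_cone \<Omega> zb\<close>] \<open>norm w = 1\<close> by simp
  ultimately show False
    using \<open>\<alpha> > 0\<close> by simp
qed

lemma growth_bound_iff_polar_cone:
  fixes g :: "'a::real_inner"
  assumes "\<alpha> \<ge> 0"
  shows "(\<forall>w\<in>K. \<alpha> * norm w \<le> g \<bullet> w) \<longleftrightarrow> (\<forall>b\<in>cball 0 1. \<alpha> *\<^sub>R b - g \<in> polar_cone K)"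
proof
  assume growth: "\<forall>w\<in>K. \<alpha> * norm w \<le> g \<bullet> w"
  show "\<forall>b\<in>cball 0 1. \<alpha> *\<^sub>R b - g \<in> polar_cone K"
  proof
    fix b :: 'a
    assume "b \<in> cball 0 1"
    then have "b \<bullet> w \<le> norm w" for w
      using norm_cauchy_schwarz[of b w] mult_left_le_one_le[of "norm w" "norm b"] by simp
    then have scaled: "\<alpha> * (b \<bullet> w) \<le> \<alpha> * norm w" for w
      using assms by (simp add: mult_left_mono)
    have "(\<alpha> *\<^sub>R b - g) \<bullet> w \<le> 0" if "w \<in> K" for w
      using scaled[of w] bspec[OF growth that] by (simp add: inner_diff_left)
    then show "\<alpha> *\<^sub>R b - g \<in> polar_cone K"
      by (simp add: polar_cone_def)
  qed
next
  assume polar: "\<forall>b\<in>cball 0 1. \<alpha> *\<^sub>R b - g \<in> polar_cone K"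
  show "\<forall>w\<in>K. \<alpha> * norm w \<le> g \<bullet> w"
  proof
    fix w
    assume "w \<in> K"
    have "sgn w \<in> cball 0 1"
      by (simp add: norm_sgn)
    then have "(\<alpha> *\<^sub>R sgn w - g) \<bullet> w \<le> 0"
      using polar \<open>w \<in> K\<close> by (auto simp: polar_cone_def)
    moreover have "sgn w \<bullet> w = norm w"
      by (cases "w = 0") (simp_all add: sgn_div_norm dot_square_norm power2_eq_square)
    ultimately show "\<alpha> * norm w \<le> g \<bullet> w"
      by (simp add: inner_diff_left)
  qed
qed

theorem lemma4p4:
  fixes f :: "'a::euclidean_space \<Rightarrow> real" and gradf :: "'a \<Rightarrow> 'a"
    and P :: "'a \<Rightarrow> 'b::euclidean_space" and DP :: "'a \<Rightarrow> ('a \<Rightarrow>\<^sub>L 'b)"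
    and D :: "'b set" and zb :: 'a
  assumes f_C1: "\<And>z. (f has_derivative (\<lambda>h. gradf z \<bullet> h)) (at z)" "continuous_on UNIV gradf"
    and P_C1: "\<And>z. (P has_derivative blinfun_apply (DP z)) (at z)" "continuous_on UNIV DP"
    and D_closed: "closed D"
    and zb_feas: "P zb \<in> D"
    and ggcq: "GGCQ P D zb (blinfun_apply (DP zb))"
  shows "sharp_min f {z. P z \<in> D} zb \<longleftrightarrow>
    (\<exists>\<alpha>'>0. \<forall>u \<in> lin_tangent_cone P D zb (blinfun_apply (DP zb)). gradf zb \<bullet> u \<ge> \<alpha>' * norm u)"
proof -
  let ?\<Omega> = "{z. P z \<in> D}"
  let ?growth = "\<lambda>K \<alpha>. \<forall>w\<in>K. \<alpha> * norm w \<le> gradf zb \<bullet> w"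
  have "sharp_min f ?\<Omega> zb \<longleftrightarrow> (\<exists>\<alpha>>0. ?growth (tangent_cone ?\<Omega> zb) \<alpha>)"
    using tangent_growth_if_sharp_min[OF f_C1(1)] sharp_min_if_tangent_growth[OF f_C1(1)] zb_feas
    by (metis mem_Collect_eq)
  also have "\<dots> \<longleftrightarrow> (\<exists>\<alpha>>0. ?growth (lin_tangent_cone P D zb (blinfun_apply (DP zb))) \<alpha>)"
    using ggcq growth_bound_iff_polar_cone
    unfolding GGCQ_def regular_normal_cone_def by (metis less_imp_le)
  finally show ?thesis .
qed

end
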